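(* Let $n\ge3$, let the sites of an $n$-qubit chain be partitioned into nonempty consecutive intervals $L=\{1,\dots,a\}$, $C=\{a+1,\dots,a+k\}$, $R=\{a+k+1,\dots,n\}$, and let $W\in\mathrm{Sp}(2n,\mathbb{Z}_2)$ be the symplectic matrix of a Clifford unitary satisfying the left wall condition around $C$. Then $G_{\mathrm{left}}$ and $G_{\mathrm{right}}$ are $J$-orthogonal: $g^TJg'=0$ for all $g\in G_{\mathrm{left}}$, $g'\in G_{\mathrm{right}}$. Equivalently, the Pauli subgroups on $C$ corresponding to $G_{\mathrm{left}}$ and $G_{\mathrm{right}}$ pairwise commute.
   Context: Pauli operators modulo phases are identified with $\mathbb{Z}_2^{2n}$ via $(p_1,q_1,\dots,p_n,q_n)\mapsto X^{p_1}Z^{q_1}\otimes\cdots\otimes X^{p_n}Z^{q_n}$; symplectic form $J=\bigoplus_{i=1}^n\begin{pmatrix}0&1\\1&0\end{pmatrix}$ (Paulis commute iff $b^TJb'=0$); $\mathrm{Sp}(2n,\mathbb{Z}_2)=\{S:SJS^T=J\}$. $V_S$ denotes vectors supported on the site set $S$, $\mathbb{Z}_2^{2n}=V_L\oplus V_C\oplus V_R$, vectors $(l,c,r)$, $\pi_C$ the projection onto $V_C$. Left wall condition: for all $t\ge1$, $l\in V_L$: $W^t(l,0,0)\in V_L\oplus V_C\oplus\{0\}$. Internal subspaces: $G_{\mathrm{left}}=\pi_C(\mathrm{span}\{W^t(l,0,0):t\ge0,l\in V_L\})$, $G_{\mathrm{right}}=\pi_C(\mathrm{span}\{W^t(0,0,r):t\ge0,r\in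 V_R\})$. *)

theory Defs
  imports Main "HOL-Library.Z2"
begin

text \<open>Conventions: n qubits, sites indexed 0..n-1 (site s is the paper's site s+1).
Vectors in Z_2^{2n} are functions nat => bit vanishing at indices >= 2n;
coordinate 2s is p_s (X-part) and 2s+1 is q_s (Z-part) of site s.
Matrices are functions nat => nat => bit; only entries with indices < 2n matter.\<close>

definition vecs :: "nat \<Rightarrow> (nat \<Rightarrow> bit) set" where
  "vecs n = {v. \<forall>i\<ge>2*n. v i = 0}"

definition Jmat :: "nat \<Rightarrow> nat \<Rightarrow> nat \<Rightarrow> bit" where
  "Jmat n i j = (if i < 2*n \<and> j < 2*n \<and> i div 2 = j div 2 \<and> i \<noteq> j then 1 else 0)"

definition symp_form :: "nat \<Rightarrow> (nat \<Rightarrow> bit) \<Rightarrow> (nat \<Rightarrow> bit) \<Rightarrow> bit" where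
  "symp_form n b b' = (\<Sum>i<2*n. \<Sum>j<2*n. b i * Jmat n i j * b' j)"

definition symplectic :: "nat \<Rightarrow> (nat \<Rightarrow> nat \<Rightarrow> bit) \<Rightarrow> bool" where
  "symplectic n S \<longleftrightarrow>
     (\<forall>i<2*n. \<forall>j<2*n. (\<Sum>l<2*n. \<Sum>m<2*n. S i l * Jmat n l m * S j m) = Jmat n i j)"

definition mulv :: "nat \<Rightarrow> (nat \<Rightarrow> nat \<Rightarrow> bit) \<Rightarrow> (nat \<Rightarrow> bit) \<Rightarrow> (nat \<Rightarrow> bit)" where
  "mulv n W v = (\<lambda>i. if i < 2*n then (\<Sum>j<2*n. W i j * v j) else 0)"

definition supp_on :: "nat \<Rightarrow> nat set \<Rightarrow> (nat \<Rightarrow> bit) set" where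
  "supp_on n S = {v \<in> vecs n. \<forall>i. v i \<noteq> 0 \<longrightarrow> i div 2 \<in> S}"

definition projS :: "nat set \<Rightarrow> (nat \<Rightarrow> bit) \<Rightarrow> (nat \<Rightarrow> bit)" where
  "projS S v = (\<lambda>i. if i div 2 \<in> S then v i else 0)"

definition span2 :: "(nat \<Rightarrow> bit) set \<Rightarrow> (nat \<Rightarrow> bit) set" where
  "span2 A = {v. \<exists>m (c :: nat \<Rightarrow> bit) u. (\<forall>i<m. u i \<in> A) \<and>
                   v = (\<lambda>x. \<Sum>i<m. c i * u i x)}"

definition sitesL :: "nat \<Rightarrow> nat set" where "sitesL a = {..<a}"
definition sitesC :: "nat \<Rightarrow> nat \<Rightarrow> nat set" where "sitesC a k = {a..<a+k}"
definition sitesR :: "nat \<Rightarrow> nat \<Rightarrow> nat \<Rightarrow> nat set" where "sitesR n a k = {a+k..<n}"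

definition left_wall :: "nat \<Rightarrow> nat \<Rightarrow> nat \<Rightarrow> (nat \<Rightarrow> nat \<Rightarrow> bit) \<Rightarrow> bool" where
  "left_wall n a k W \<longleftrightarrow>
     (\<forall>t\<ge>1. \<forall>l\<in>supp_on n (sitesL a). (mulv n W ^^ t) l \<in> supp_on n (sitesL a \<union> sitesC a k))"

definition G_left :: "nat \<Rightarrow> nat \<Rightarrow> nat \<Rightarrow> (nat \<Rightarrow> nat \<Rightarrow> bit) \<Rightarrow> (nat \<Rightarrow> bit) set" where
  "G_left n a k W = projS (sitesC a k) `
     span2 {(mulv n W ^^ t) l | t l. l \<in> supp_on n (sitesL a)}"

definition G_right :: "nat \<Rightarrow> nat \<Rightarrow> nat \<Rightarrow> (nat \<Rightarrow> nat \<Rightarrow> bit) \<Rightarrow> (nat \<Rightarrow> bit) set" where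
  "G_right n a k W = projS (sitesC a k) `
     span2 {(mulv n W ^^ t) r | t r. r \<in> supp_on n (sitesR n a k)}"

end

theory Submission
  imports Defs
begin

text \<open>A symplectic W preserves the form and permutes the finite space of vectors, so every
orbit is periodic. Periodicity lets the power W^s be moved off r as a nonnegative power on l:
the form of W^t l and W^s r equals that of W^t' l and r for some t' \<ge> 0. The wall keeps W^t' l
supported on L \<union> C, disjoint from R, so the form vanishes, and by bilinearity the two spans
are orthogonal. Finally the left span is supported on L \<union> C, while the right span is
orthogonal to all of V_L and therefore vanishes on L; so projecting both onto C does not
change the form.\<close>

text \<open>Keep bit arithmetic in ring form, so that the algebra of finite sums applies.\<close>
declare mult_bit_eq_and [simp del] add_bit_eq_xor [simp del]

lemma UNIV_bit: "(UNIV :: bit set) = {0, 1}"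
  by (auto intro: bit.exhaust)

instance bit :: finite
  by standard (simp add: UNIV_bit)

subsection \<open>The symplectic form\<close>

text \<open>J pairs the X- and Z-coordinate of each site.\<close>
definition partner :: "nat \<Rightarrow> nat" where
  "partner i = (if even i then Suc i else i - 1)"

lemma partner_partner [simp]: "partner (partner i) = i"
  by (auto simp: partner_def)

lemma partner_div_2 [simp]: "partner i div 2 = i div 2"
  by (auto simp: partner_def elim!: evenE oddE)

lemma partner_less_iff [simp]: "partner i < 2 * n \<longleftrightarrow> i < 2 * n"
  by (auto simp: partner_def elim!: evenE oddE)

lemma Jmat_partner: "Jmat n i j = (if i < 2 * n \<and> j = partner i then 1 else 0)"
proof -
  have "(i div 2 = j div 2 \<and> i \<noteq> j) \<longleftrightarrow> j = partner i"
    by (auto simp: partner_def elim!: evenE oddE)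
  then show ?thesis
    unfolding Jmat_def by auto
qed

lemma sum_Jmat_mult:
  assumes "i < 2 * n"
  shows "(\<Sum>j<2 * n. Jmat n i j * f j) = f (partner i)"
proof -
  have "(\<Sum>j<2 * n. Jmat n i j * f j) = (\<Sum>j<2 * n. if j = partner i then f j else 0)"
    by (rule sum.cong) (auto simp: Jmat_partner assms)
  then show ?thesis
    using assms by (simp add: sum.delta)
qed

lemma symp_form_partner: "symp_form n u v = (\<Sum>i<2 * n. u i * v (partner i))"
  unfolding symp_form_def
  by (intro sum.cong refl) (simp add: mult.assoc sum_distrib_left [symmetric] sum_Jmat_mult)

lemma symp_form_commute: "symp_form n u v = symp_form n v u"
  unfolding symp_form_partner
  by (rule sum.reindex_bij_witness [of _ partner partner]) (simp_all add: mult.commute [of "u _"])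

lemma symp_form_lincomb_left:
  "symp_form n (\<lambda>x. \<Sum>i<m. c i * u i x) v = (\<Sum>i<m. c i * symp_form n (u i) v)"
  unfolding symp_form_partner
  by (simp add: sum_distrib_left sum_distrib_right mult.assoc sum.swap [of _ "{..<m}"])

lemma symp_form_span2_orthogonal:
  assumes "\<forall>u\<in>A. \<forall>w\<in>B. symp_form n u w = 0" and "x \<in> span2 A" and "y \<in> span2 B"
  shows "symp_form n x y = 0"
proof -
  have orth_right: "symp_form n u y = 0" if "u \<in> A" for u
  proof -
    obtain m :: nat and c w where w: "\<forall>i<m. w i \<in> B" and y: "y = (\<lambda>x. \<Sum>i<m. c i * w i x)"
      using \<open>y \<in> span2 B\<close> unfolding span2_def by blast
    have "symp_form n (w i) u = 0" if "i < m" for i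
      using assms(1) \<open>u \<in> A\<close> w that symp_form_commute by metis
    then show ?thesis
      unfolding y symp_form_commute [of n u] symp_form_lincomb_left by simp
  qed
  obtain m :: nat and c u where "\<forall>i<m. u i \<in> A" and "x = (\<lambda>x. \<Sum>i<m. c i * u i x)"
    using \<open>x \<in> span2 A\<close> unfolding span2_def by blast
  then show ?thesis
    using orth_right by (simp add: symp_form_lincomb_left)
qed

subsection \<open>Symplectic matrices preserve the form\<close>

definition dot :: "nat \<Rightarrow> (nat \<Rightarrow> bit) \<Rightarrow> (nat \<Rightarrow> bit) \<Rightarrow> bit" where
  "dot n u v = (\<Sum>i<2 * n. u i * v i)"

definition jvec :: "nat \<Rightarrow> (nat \<Rightarrow> bit) \<Rightarrow> (nat \<Rightarrow> bit)" where
  "jvec n v = (\<lambda>i. if i < 2 * n then v (partner i) else 0)"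

lemma mulv_in_vecs [simp]: "mulv n W v \<in> vecs n"
  by (simp add: mulv_def vecs_def)

lemma jvec_in_vecs [simp]: "jvec n v \<in> vecs n"
  by (simp add: jvec_def vecs_def)

lemma jvec_jvec: "v \<in> vecs n \<Longrightarrow> jvec n (jvec n v) = v"
  by (auto simp: jvec_def vecs_def fun_eq_iff)

lemma finite_vecs: "finite (vecs n)"
proof -
  let ?of_list = "\<lambda>xs i. if i < 2 * n then xs ! i else 0"
  have "vecs n \<subseteq> ?of_list ` {xs. set xs \<subseteq> UNIV \<and> length xs = 2 * n}"
  proof
    fix v
    assume "v \<in> vecs n"
    then have "v = ?of_list (map v [0..<2 * n])"
      by (auto simp: vecs_def)
    then show "v \<in> ?of_list ` {xs. set xs \<subseteq> UNIV \<and> length xs = 2 * n}"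
      by (intro image_eqI) auto
  qed
  then show ?thesis
    by (rule finite_subset) (intro finite_imageI finite_lists_length_eq, simp)
qed

lemma symp_form_dot: "symp_form n u v = dot n u (jvec n v)"
  unfolding symp_form_partner dot_def jvec_def by (rule sum.cong) auto

lemma dot_mulv_transpose: "dot n (mulv n W u) v = dot n u (mulv n (\<lambda>i j. W j i) v)"
proof -
  have "dot n (mulv n W u) v = (\<Sum>i<2 * n. \<Sum>j<2 * n. W i j * u j * v i)"
    unfolding dot_def mulv_def by (simp add: sum_distrib_right)
  also have "\<dots> = (\<Sum>j<2 * n. \<Sum>i<2 * n. W i j * u j * v i)"
    by (rule sum.swap)
  also have "\<dots> = dot n u (mulv n (\<lambda>i j. W j i) v)"
    unfolding dot_def mulv_def by (simp add: sum_distrib_left mult_ac)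
  finally show ?thesis .
qed

text \<open>The defining identity W J W^T = J, read as an identity of linear maps.\<close>
lemma symplectic_mulv_jvec_transpose:
  assumes "symplectic n W"
  shows "mulv n W (jvec n (mulv n (\<lambda>i j. W j i) v)) = jvec n v"
proof (rule ext)
  fix i
  show "mulv n W (jvec n (mulv n (\<lambda>i j. W j i) v)) i = jvec n v i"
  proof (cases "i < 2 * n")
    case True
    have WJWT: "(\<Sum>l<2 * n. W i l * W j (partner l)) = Jmat n i j" if "j < 2 * n" for j
    proof -
      have "(\<Sum>l<2 * n. \<Sum>m<2 * n. W i l * Jmat n l m * W j m) = Jmat n i j"
        using assms True that unfolding symplectic_def by blast
      then show ?thesis
        by (simp add: mult.assoc sum_distrib_left [symmetric] sum_Jmat_mult)
    qed
    have "mulv n W (jvec n (mulv n (\<lambda>i j. W j i) v)) i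
        = (\<Sum>l<2 * n. W i l * (\<Sum>j<2 * n. W j (partner l) * v j))"
      using True unfolding mulv_def jvec_def by simp
    also have "\<dots> = (\<Sum>l<2 * n. \<Sum>j<2 * n. W i l * W j (partner l) * v j)"
      by (simp add: sum_distrib_left mult.assoc)
    also have "\<dots> = (\<Sum>j<2 * n. (\<Sum>l<2 * n. W i l * W j (partner l)) * v j)"
      by (subst sum.swap) (simp add: sum_distrib_right)
    also have "\<dots> = (\<Sum>j<2 * n. Jmat n i j * v j)"
      by (rule sum.cong) (simp_all add: WJWT)
    also have "\<dots> = jvec n v i"
      using True by (simp add: sum_Jmat_mult jvec_def)
    finally show ?thesis .
  qed (simp add: mulv_def jvec_def)
qed

lemma symplectic_inj_on_vecs:
  assumes "symplectic n W"
  shows "inj_on (mulv n W) (vecs n)"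
proof (rule finite_surj_inj [OF finite_vecs], rule subsetI)
  fix v
  assume "v \<in> vecs n"
  then have "mulv n W (jvec n (mulv n (\<lambda>i j. W j i) (jvec n v))) = v"
    using symplectic_mulv_jvec_transpose [OF assms] jvec_jvec by simp
  then show "v \<in> mulv n W ` vecs n"
    by (metis jvec_in_vecs image_eqI)
qed

text \<open>The transposed identity W^T J W = J: a one-sided inverse on a finite space is two-sided.\<close>
lemma symplectic_transpose_jvec_mulv:
  assumes "symplectic n W" and "v \<in> vecs n"
  shows "mulv n (\<lambda>i j. W j i) (jvec n (mulv n W v)) = jvec n v"
proof -
  let ?u = "jvec n (mulv n (\<lambda>i j. W j i) (jvec n (mulv n W v)))"
  have "mulv n W ?u = mulv n W v"
    using symplectic_mulv_jvec_transpose [OF assms(1)] jvec_jvec [OF mulv_in_vecs] by simp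
  then have "?u = v"
    using symplectic_inj_on_vecs [OF assms(1)] assms(2) by (meson jvec_in_vecs inj_onD)
  then show ?thesis
    using jvec_jvec [OF mulv_in_vecs] by metis
qed

lemma symplectic_symp_form_mulv:
  assumes "symplectic n W" and "v \<in> vecs n"
  shows "symp_form n (mulv n W u) (mulv n W v) = symp_form n u v"
  unfolding symp_form_dot dot_mulv_transpose symplectic_transpose_jvec_mulv [OF assms] ..

lemma funpow_mulv_in_vecs: "v \<in> vecs n \<Longrightarrow> (mulv n W ^^ t) v \<in> vecs n"
  by (cases t) auto

lemma symplectic_symp_form_funpow:
  assumes "symplectic n W" and "v \<in> vecs n"
  shows "symp_form n ((mulv n W ^^ t) u) ((mulv n W ^^ t) v) = symp_form n u v"
proof (induction t)
  case (Suc t)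
  then show ?case
    using symplectic_symp_form_mulv [OF assms(1) funpow_mulv_in_vecs [OF assms(2)]] by simp
qed simp

lemma funpow_periodic_on:
  assumes "finite A" and "inj_on f A" and "f ` A \<subseteq> A" and "x \<in> A"
  obtains d where "d > 0" and "(f ^^ d) x = x"
proof -
  have orbit: "range (\<lambda>t. (f ^^ t) x) \<subseteq> A"
  proof (rule image_subsetI)
    show "(f ^^ t) x \<in> A" for t
      by (induction t) (use assms(3,4) in auto)
  qed
  then have "\<not> inj (\<lambda>t. (f ^^ t) x)"
    using assms(1) finite_subset finite_imageD by blast
  then obtain p q where "p < q" and pq: "(f ^^ q) x = (f ^^ p) x"
    unfolding inj_def by (metis linorder_neqE_nat)
  have "inj_on (f ^^ p) A"
    using bij_betw_funpow [of f A p] endo_inj_surj [OF assms(1,3,2)] assms(2)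
    by (simp add: bij_betw_def)
  moreover have "(f ^^ p) ((f ^^ (q - p)) x) = (f ^^ p) x"
    using pq \<open>p < q\<close> by (metis funpow_add le_add_diff_inverse less_imp_le o_apply)
  ultimately have "(f ^^ (q - p)) x = x"
    using orbit assms(4) by (auto dest: inj_onD)
  with \<open>p < q\<close> show thesis
    by (intro that [of "q - p"]) simp_all
qed

subsection \<open>Supports and the left wall\<close>

lemma symp_form_disjoint_supp_on:
  assumes "x \<in> supp_on n S" and "y \<in> supp_on n S'" and "S \<inter> S' = {}"
  shows "symp_form n x y = 0"
proof -
  have "x i * y (partner i) = 0" for i
  proof (cases "x i = 0")
    case False
    then have "i div 2 \<in> S"
      using assms(1) by (auto simp: supp_on_def)
    then have "i div 2 \<notin> S'"
      using assms(3) by blast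
    then have "y (partner i) = 0"
      using assms(2) by (auto simp: supp_on_def)
    then show ?thesis
      by simp
  qed simp
  then show ?thesis
    unfolding symp_form_partner by (intro sum.neutral) auto
qed

lemma supp_on_mono: "x \<in> supp_on n S \<Longrightarrow> S \<subseteq> S' \<Longrightarrow> x \<in> supp_on n S'"
  by (auto simp: supp_on_def)

lemma span2_superset: "A \<subseteq> span2 A"
proof
  fix v
  assume "v \<in> A"
  then show "v \<in> span2 A"
    unfolding span2_def by (intro CollectI exI [of _ 1] exI [of _ "\<lambda>_. 1"] exI [of _ "\<lambda>_. v"]) simp
qed

lemma span2_supp_on:
  assumes "A \<subseteq> supp_on n S"
  shows "span2 A \<subseteq> supp_on n S"
proof
  fix x
  assume "x \<in> span2 A"
  then obtain m :: nat and c u where u: "\<forall>i<m. u i \<in> supp_on n S"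
    and x: "x = (\<lambda>j. \<Sum>i<m. c i * u i j)"
    using assms unfolding span2_def by blast
  have "x j = 0" if "j \<ge> 2 * n" for j
    using u that unfolding x by (simp add: supp_on_def vecs_def)
  moreover have "j div 2 \<in> S" if "x j \<noteq> 0" for j
  proof -
    have "\<exists>i<m. c i * u i j \<noteq> 0"
    proof (rule ccontr)
      assume "\<not> (\<exists>i<m. c i * u i j \<noteq> 0)"
      then have "x j = 0"
        unfolding x by (intro sum.neutral) auto
      with \<open>x j \<noteq> 0\<close> show False ..
    qed
    then obtain i where "i < m" and "u i j \<noteq> 0"
      by auto
    then show ?thesis
      using u by (auto simp: supp_on_def)
  qed
  ultimately show "x \<in> supp_on n S"
    by (simp add: supp_on_def vecs_def)
qed

lemma left_wall_funpow:
  assumes "left_wall n a k W" and "l \<in> supp_on n (sitesL a)"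
  shows "(mulv n W ^^ t) l \<in> supp_on n (sitesL a \<union> sitesC a k)"
proof (cases "t = 0")
  case True
  then show ?thesis
    using assms(2) supp_on_mono by auto
next
  case False
  then show ?thesis
    using assms unfolding left_wall_def by auto
qed

lemma left_wall_orbits_orthogonal:
  assumes "symplectic n W" and "left_wall n a k W"
    and l: "l \<in> supp_on n (sitesL a)" and r: "r \<in> supp_on n (sitesR n a k)"
  shows "symp_form n ((mulv n W ^^ t) l) ((mulv n W ^^ s) r) = 0"
proof -
  have "mulv n W ` vecs n \<subseteq> vecs n" and "l \<in> vecs n"
    using l by (auto simp: supp_on_def)
  then obtain d where "d > 0" and d: "(mulv n W ^^ d) l = l"
    using funpow_periodic_on [OF finite_vecs symplectic_inj_on_vecs [OF assms(1)]] by blast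
  have "(mulv n W ^^ t) l = (mulv n W ^^ (t + d * s)) l"
    using funpow_mod_eq [OF d, of t] funpow_mod_eq [OF d, of "t + d * s"] by simp
  also have "\<dots> = (mulv n W ^^ s) ((mulv n W ^^ (t + d * s - s)) l)"
  proof -
    have "s \<le> t + d * s"
      using \<open>d > 0\<close> by (simp add: trans_le_add2)
    then show ?thesis
      by (metis funpow_add le_add_diff_inverse o_apply)
  qed
  finally have "symp_form n ((mulv n W ^^ t) l) ((mulv n W ^^ s) r)
      = symp_form n ((mulv n W ^^ (t + d * s - s)) l) r"
    using symplectic_symp_form_funpow [OF assms(1)] r by (simp add: supp_on_def)
  also have "\<dots> = 0"
    using left_wall_funpow [OF assms(2) l] r
    by (rule symp_form_disjoint_supp_on) (auto simp: sitesL_def sitesC_def sitesR_def)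
  finally show ?thesis .
qed

lemma symp_form_orthogonal_supp_on_vanishes:
  assumes "\<forall>l\<in>supp_on n S. symp_form n l y = 0" and "i div 2 \<in> S" and "i < 2 * n"
  shows "y i = 0"
proof -
  let ?e = "\<lambda>j. if j = partner i then 1 else 0 :: bit"
  have "partner i < 2 * n"
    using assms(3) by simp
  then have "?e \<in> supp_on n S"
    using assms(2) by (auto simp: supp_on_def vecs_def simp del: partner_less_iff)
  moreover have "symp_form n ?e y = (\<Sum>j<2 * n. if j = partner i then y i else 0)"
    unfolding symp_form_partner by (rule sum.cong) auto
  then have "symp_form n ?e y = y i"
    using \<open>partner i < 2 * n\<close> by (simp add: sum.delta)
  ultimately show ?thesis
    using assms(1) by simp
qed

lemma symp_form_projS:
  assumes "x \<in> supp_on n (S \<union> C)" and "\<forall>i. i div 2 \<in> S \<longrightarrow> y i = 0"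
  shows "symp_form n (projS C x) (projS C y) = symp_form n x y"
  unfolding symp_form_partner
proof (rule sum.cong [OF refl])
  fix i
  show "projS C x i * projS C y (partner i) = x i * y (partner i)"
  proof (cases "i div 2 \<in> C")
    case False
    then have "x i = 0 \<or> y (partner i) = 0"
      using assms by (auto simp: supp_on_def)
    with False show ?thesis
      by (auto simp: projS_def)
  qed (simp add: projS_def)
qed

theorem lemma5:
  fixes n a k :: nat and W :: "nat \<Rightarrow> nat \<Rightarrow> bit"
  assumes "n \<ge> 3" and "a \<ge> 1" and "k \<ge> 1" and "a + k < n"
    and "symplectic n W"
    and "left_wall n a k W"
  shows "\<forall>g\<in>G_left n a k W. \<forall>g'\<in>G_right n a k W. symp_form n g g' = 0"
proof (intro ballI)
  fix g g'
  assume "g \<in> G_left n a k W" and "g' \<in> G_right n a k W"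
  define A where "A = {(mulv n W ^^ t) l | t l. l \<in> supp_on n (sitesL a)}"
  define B where "B = {(mulv n W ^^ t) r | t r. r \<in> supp_on n (sitesR n a k)}"
  obtain x where x: "x \<in> span2 A" and g: "g = projS (sitesC a k) x"
    using \<open>g \<in> G_left n a k W\<close> unfolding G_left_def A_def by blast
  obtain y where y: "y \<in> span2 B" and g': "g' = projS (sitesC a k) y"
    using \<open>g' \<in> G_right n a k W\<close> unfolding G_right_def B_def by blast
  have AB: "\<forall>u\<in>A. \<forall>w\<in>B. symp_form n u w = 0"
    unfolding A_def B_def using left_wall_orbits_orthogonal [OF assms(5,6)] by blast
  have "x \<in> supp_on n (sitesL a \<union> sitesC a k)"
    using span2_supp_on [of A] left_wall_funpow [OF assms(6)] x unfolding A_def by blast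
  moreover have "y i = 0" if "i div 2 \<in> sitesL a" for i
  proof (rule symp_form_orthogonal_supp_on_vanishes [OF _ that])
    have "supp_on n (sitesL a) \<subseteq> span2 A"
      using span2_superset [of A] unfolding A_def by (force intro: exI [of _ 0])
    then show "\<forall>l\<in>supp_on n (sitesL a). symp_form n l y = 0"
      using symp_form_span2_orthogonal [OF AB _ y] by blast
    show "i < 2 * n"
      using that assms(4) by (simp add: sitesL_def)
  qed
  ultimately have "symp_form n g g' = symp_form n x y"
    unfolding g g' by (intro symp_form_projS) auto
  also have "\<dots> = 0"
    using AB x y by (rule symp_form_span2_orthogonal)
  finally show "symp_form n g g' = 0" .
qed

end
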